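(* Let $X$ be a Dedekind complete Riesz space and $(x_{n})$ a sequence in $X^{u}_{+}$. Assume $\sum_{n=1}^{\infty}x_{n}=\infty_{B}+u$ where $B$ is a band of $X$ and $u\in X^u$, $u\perp B$, and let $R_{n}=\sum_{k=n}^{\infty}x_{k}$. Then for every $y\in X_{+}$, $$Py=\lim_{n\to\infty}(y\wedge R_{n})\quad(\text{order limit}),$$ where $P$ is the band projection onto $B$.
   Context: $X^{u}$ is the universal completion of $X$. The sup-completion $X^{s}$ of $X$ is the set of classes of nonempty upward directed subsets of $X$ under $A\sim B$ iff $\sup_{a\in A}(x\wedge a)=\sup_{b\in B}(x\wedge b)$ for all $x\in X$, with induced operations and order; it is a lattice-ordered cone containing $X$ and $X^u_+$ in which every nonempty subset has a supremum. Infinite sums of positive elements are suprema of partial sums in $X^{s}$. For a band $B$ of $X$, $\infty_{B}$ is the supremum of $B$ in $X^{s}$. *)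

theory Defs
  imports Complex_Main
begin

text \<open>Riesz spaces are modelled as types of class ordered_real_vector + lattice.
  The universal completion X^u is the ambient type 'u (a universally complete Riesz space:
  Dedekind complete via conditionally_complete_lattice, plus lateral completeness);
  X is a subset of it (an order dense Riesz subspace).\<close>

definition rabs :: "'u::{ordered_real_vector, lattice} \<Rightarrow> 'u" where
  "rabs v = sup v (- v)"

definition disj :: "'u::{ordered_real_vector, lattice} \<Rightarrow> 'u \<Rightarrow> bool" where
  "disj v w \<longleftrightarrow> inf (rabs v) (rabs w) = 0"

definition laterally_complete :: "'u::{ordered_real_vector, conditionally_complete_lattice} set \<Rightarrow> bool" where
  "laterally_complete U \<longleftrightarrow>
     (\<forall>D. D \<subseteq> U \<and> (\<forall>d\<in>D. 0 \<le> d) \<and> (\<forall>d\<in>D. \<forall>e\<in>D. d \<noteq> e \<longrightarrow> disj d e)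
          \<longrightarrow> bdd_above D)"

definition riesz_subspace :: "'u::{ordered_real_vector, lattice} set \<Rightarrow> bool" where
  "riesz_subspace X \<longleftrightarrow> 0 \<in> X \<and> (\<forall>a\<in>X. \<forall>b\<in>X. a + b \<in> X) \<and>
     (\<forall>c. \<forall>a\<in>X. c *\<^sub>R a \<in> X) \<and> (\<forall>a\<in>X. \<forall>b\<in>X. sup a b \<in> X)"

definition order_dense :: "'u::{ordered_real_vector, lattice} set \<Rightarrow> bool" where
  "order_dense X \<longleftrightarrow> (\<forall>v. 0 < v \<longrightarrow> (\<exists>x\<in>X. 0 < x \<and> x \<le> v))"

definition universal_completion_of :: "'u::{ordered_real_vector, conditionally_complete_lattice} set \<Rightarrow> bool" where
  "universal_completion_of X \<longleftrightarrow> riesz_subspace X \<and> order_dense X \<and> laterally_complete (UNIV :: 'u set)"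

definition is_lub_in :: "'u::order set \<Rightarrow> 'u set \<Rightarrow> 'u \<Rightarrow> bool" where
  "is_lub_in X D s \<longleftrightarrow> s \<in> X \<and> (\<forall>d\<in>D. d \<le> s) \<and> (\<forall>t\<in>X. (\<forall>d\<in>D. d \<le> t) \<longrightarrow> s \<le> t)"

definition dedekind_complete_in :: "'u::order set \<Rightarrow> bool" where
  "dedekind_complete_in X \<longleftrightarrow>
     (\<forall>D. D \<subseteq> X \<and> D \<noteq> {} \<and> (\<exists>b\<in>X. \<forall>d\<in>D. d \<le> b) \<longrightarrow> (\<exists>s. is_lub_in X D s))"

definition band_of :: "'u::{ordered_real_vector, lattice} set \<Rightarrow> 'u set \<Rightarrow> bool" where
  "band_of X B \<longleftrightarrow> B \<subseteq> X \<and> 0 \<in> B \<and> (\<forall>a\<in>B. \<forall>b\<in>B. a + b \<in> B) \<and> (\<forall>c. \<forall>a\<in>B. c *\<^sub>R a \<in> B) \<and>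
     (\<forall>x\<in>X. \<forall>b\<in>B. rabs x \<le> rabs b \<longrightarrow> x \<in> B) \<and>
     (\<forall>D s. D \<subseteq> B \<and> is_lub_in X D s \<longrightarrow> s \<in> B)"

definition disj_compl :: "'u::{ordered_real_vector, lattice} set \<Rightarrow> 'u set \<Rightarrow> 'u set" where
  "disj_compl X B = {x \<in> X. \<forall>b\<in>B. disj x b}"

definition band_projection :: "'u::{ordered_real_vector, lattice} set \<Rightarrow> 'u set \<Rightarrow> ('u \<Rightarrow> 'u) \<Rightarrow> bool" where
  "band_projection X B P \<longleftrightarrow> (\<forall>x\<in>X. P x \<in> B \<and> x - P x \<in> disj_compl X B)"

text \<open>Sup-completion X^s: elements are represented by nonempty upward directed subsets of X,
  equality in X^s is the equivalence relation sc_eq.\<close>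
definition up_directed :: "'u::order set \<Rightarrow> bool" where
  "up_directed A \<longleftrightarrow> A \<noteq> {} \<and> (\<forall>a\<in>A. \<forall>b\<in>A. \<exists>c\<in>A. a \<le> c \<and> b \<le> c)"

definition sc_eq :: "'u::{ordered_real_vector, conditionally_complete_lattice} set \<Rightarrow> 'u set \<Rightarrow> 'u set \<Rightarrow> bool" where
  "sc_eq X A C \<longleftrightarrow> A \<subseteq> X \<and> C \<subseteq> X \<and> up_directed A \<and> up_directed C \<and>
     (\<forall>x\<in>X. Sup ((\<lambda>a. inf x a) ` A) = Sup ((\<lambda>c. inf x c) ` C))"

text \<open>Embedding of X^u_+ (and of X) into X^s.\<close>
definition sc_emb :: "'u::order set \<Rightarrow> 'u \<Rightarrow> 'u set" where
  "sc_emb X v = {x \<in> X. x \<le> v}"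

definition sc_plus :: "'u::plus set \<Rightarrow> 'u set \<Rightarrow> 'u set" where
  "sc_plus A C = {a + c | a c. a \<in> A \<and> c \<in> C}"

definition sc_inf :: "'u::lattice set \<Rightarrow> 'u set \<Rightarrow> 'u set" where
  "sc_inf A C = {inf a c | a c. a \<in> A \<and> c \<in> C}"

text \<open>\<infinity>_B, the supremum of the band B in X^s, is represented by B itself.\<close>
definition sc_infty :: "'u set \<Rightarrow> 'u set" where
  "sc_infty B = B"

text \<open>The tail sum \<Sum>_{k\<ge>n} f k in X^s: the supremum of the increasing partial sums,
  represented by the union of the representatives of the partial sums.\<close>
definition sc_tail_sum :: "'u::{ordered_real_vector, lattice} set \<Rightarrow> (nat \<Rightarrow> 'u) \<Rightarrow> nat \<Rightarrow> 'u set" where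
  "sc_tail_sum X f n = (\<Union>N. sc_emb X (\<Sum>k\<in>{n..N}. f k))"

definition order_conv :: "(nat \<Rightarrow> 'u::{ordered_real_vector, conditionally_complete_lattice}) \<Rightarrow> 'u \<Rightarrow> bool" where
  "order_conv z l \<longleftrightarrow> (\<exists>p. decseq p \<and> (\<forall>n. 0 \<le> p n) \<and> Inf (range p) = 0 \<and>
      (\<forall>n. rabs (z n - l) \<le> p n))"

end

(*
  Write y = P y + d with d disjoint from B, and let z n = y \<wedge> R n, the supremum of the meets of y
  with the partial sums x n + ... + x N.  Then z is decreasing and P y \<le> z n \<le> P y + d \<wedge> R n,
  so it suffices that p \<wedge> R n = p for p \<in> B, p \<ge> 0, and that the d \<wedge> R n decrease to 0.

  Testing the hypothesis on elements of B and of its disjoint complement gives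
  p \<wedge> (\<Sum>k x k) = p for positive p \<in> B and (k d) \<wedge> (\<Sum>k x k) = (k d) \<wedge> u\<^sup>+ for every k.
  For p \<in> B this yields k p \<le> x 0 + ... + x (n - 1) + k (p \<wedge> R n) for all k, and the Archimedean
  property forces p \<le> p \<wedge> R n.  For d it shows that the excess of the partial sums over u\<^sup>+ is
  disjoint from d, whence d \<wedge> R n \<le> (u\<^sup>+ - x 0 - ... - x (n - 1))\<^sup>+; another Archimedean argument
  shows that these bounds, which are also below d, have infimum 0.
*)
theory Submission
  imports Defs "HOL-Library.Lattice_Algebras"
begin

section \<open>Lattice-ordered groups\<close>

context lattice_ab_group_add
begin

lemma diff_inf_eq_sup_diff_0: "a - inf a b = sup (a - b) 0"
  by (simp add: diff_inf_eq_sup add_sup_distrib_left sup_commute)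

lemma inf_add_sup_diff_0: "inf b a + sup (a - b) 0 = a"
  using diff_inf_eq_sup_diff_0 [of a b] by (metis add.commute diff_add_cancel inf_commute)

subclass distrib_lattice
proof
  have inf_sup_le: "inf x (sup a b) \<le> sup (inf x a) (inf x b)" for x a b
  proof -
    let ?t = "sup (inf x a) (inf x b)" and ?s = "sup a b"
    have "c \<le> ?t + sup (?s - x) 0" if "c = a \<or> c = b" for c
    proof -
      have "c = inf x c + sup (c - x) 0" by (simp add: inf_add_sup_diff_0)
      also have "\<dots> \<le> ?t + sup (?s - x) 0"
        using that by (auto intro!: add_mono sup_mono diff_right_mono)
      finally show ?thesis .
    qed
    then have "?s \<le> ?t + sup (?s - x) 0" by (intro le_supI) auto
    then have "?s - sup (?s - x) 0 \<le> ?t" by (simp only: diff_le_eq)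
    moreover have "inf x ?s = ?s - sup (?s - x) 0"
      using inf_add_sup_diff_0 [of x ?s] by (simp only: eq_diff_eq)
    ultimately show ?thesis by simp
  qed
  have "inf x (sup a b) = sup (inf x a) (inf x b)" for x a b
    by (rule order.antisym [OF inf_sup_le]) (auto intro: le_infI2)
  then show "sup x (inf y z) = inf (sup x y) (sup x z)" for x y z
    by (rule distrib_imp1)
qed

lemma inf_pos_part_neg_part: "inf (sup w 0) (sup (- w) 0) = 0"
proof -
  have "inf w (- w) + inf w (- w) \<le> w + - w" by (rule add_mono) simp_all
  then have "inf w (- w) \<le> 0" by simp
  then show ?thesis by (simp add: sup_inf_distrib2 [symmetric] sup_absorb2)
qed

lemma inf_add_le_add_inf:
  assumes "0 \<le> f" "0 \<le> s" "0 \<le> t"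
  shows "inf f (s + t) \<le> inf f s + inf f t"
proof -
  let ?m = "inf f (s + t)"
  have "?m - inf f s = sup (?m - f) (?m - s)"
    by (simp add: diff_inf_eq_sup add_sup_distrib_left)
  also have "\<dots> \<le> t"
    using assms by (auto simp: diff_le_eq add.commute intro: order_trans [of _ f])
  finally have "?m - inf f s \<le> t" .
  moreover have "?m - inf f s \<le> ?m"
    using assms by (metis diff_le_eq le_add_same_cancel1 le_infI)
  then have "?m - inf f s \<le> f" by (simp add: le_infI1)
  ultimately have "?m - inf f s \<le> inf f t" by simp
  then show ?thesis by (metis add.commute diff_le_eq)
qed

end

section \<open>Riesz spaces\<close>

text \<open>Riesz spaces are the sort \<open>{ordered_real_vector, lattice}\<close>, which is not a class; interpreting
  the l-group locale makes the l-group library and the lemmas above available for it.\<close>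

interpretation riesz: lattice_ab_group_add "(+)" "0 :: 'a::{ordered_real_vector, lattice}" "(-)" uminus
    "(\<le>)" "(<)" inf sup
  by unfold_locales

lemma rabs_nonneg: "0 \<le> rabs (v :: 'a::{ordered_real_vector, lattice})"
proof -
  have "v + - v \<le> rabs v + rabs v" unfolding rabs_def by (rule add_mono) simp_all
  then show ?thesis by simp
qed

lemma rabs_eq_self: "0 \<le> v \<Longrightarrow> rabs (v :: 'a::{ordered_real_vector, lattice}) = v"
  unfolding rabs_def by (simp add: sup_absorb1 order_trans [of "- v" 0 v])

lemma disj_nonneg_iff: "0 \<le> v \<Longrightarrow> disj v w \<longleftrightarrow> inf v (rabs w) = 0"
  by (simp add: disj_def rabs_eq_self)

lemma disj_sym: "disj v w \<longleftrightarrow> disj w v"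
  by (simp add: disj_def inf_commute)

lemma nonneg_if_add_disj:
  fixes b d :: "'a::{ordered_real_vector, lattice}"
  assumes "0 \<le> b + d" "disj b d"
  shows "0 \<le> b"
proof -
  have "- b \<le> d" using add_right_mono [OF assms(1), of "- b"] by (simp add: algebra_simps)
  then have "sup (- b) 0 \<le> inf (rabs b) (rabs d)"
    using rabs_nonneg [of b] rabs_nonneg [of d] unfolding rabs_def
    by (intro le_infI le_supI) (simp_all add: le_supI1)
  then have "sup (- b) 0 \<le> 0" using assms(2) by (simp only: disj_def)
  then show ?thesis by simp
qed

lemma scaleR_inf_distrib:
  fixes a b :: "'a::{ordered_real_vector, lattice}"
  assumes "0 \<le> c"
  shows "c *\<^sub>R inf a b = inf (c *\<^sub>R a) (c *\<^sub>R b)"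
proof (cases "c = 0")
  case False
  have "inverse c *\<^sub>R inf (c *\<^sub>R a) (c *\<^sub>R b) \<le> inverse c *\<^sub>R (c *\<^sub>R v)" if "v = a \<or> v = b" for v
    using assms that by (intro scaleR_left_mono) auto
  with False have "inverse c *\<^sub>R inf (c *\<^sub>R a) (c *\<^sub>R b) \<le> inf a b" by simp
  then have "c *\<^sub>R (inverse c *\<^sub>R inf (c *\<^sub>R a) (c *\<^sub>R b)) \<le> c *\<^sub>R inf a b"
    using assms by (rule scaleR_left_mono)
  moreover have "c *\<^sub>R inf a b \<le> inf (c *\<^sub>R a) (c *\<^sub>R b)"
    using assms by (intro le_infI scaleR_left_mono) simp_all
  ultimately show ?thesis using False by (simp add: order.antisym)
qed simp

lemma inf_scaleR_nat_eq_0: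
  fixes f r :: "'a::{ordered_real_vector, lattice}"
  assumes "0 \<le> f" "0 \<le> r" "inf f r = 0"
  shows "inf f (of_nat k *\<^sub>R r) = 0"
proof (induction k)
  case 0
  show ?case using assms(1) by (simp add: inf_absorb2)
next
  case (Suc k)
  have "inf f (r + of_nat k *\<^sub>R r) \<le> inf f r + inf f (of_nat k *\<^sub>R r)"
    using assms by (intro riesz.inf_add_le_add_inf) (simp_all add: scaleR_nonneg_nonneg)
  also have "\<dots> = 0" using Suc assms(3) by simp
  finally have "inf f (r + of_nat k *\<^sub>R r) = 0"
    using assms by (intro order.antisym) (simp_all add: scaleR_nonneg_nonneg)
  then show ?case by (simp add: scaleR_left_distrib)
qed

lemma eq_0_if_disjoint_le_scaleR_nat:
  fixes f r :: "'a::{ordered_real_vector, lattice}"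
  assumes "0 \<le> f" "0 \<le> r" "inf f r = 0" "f \<le> of_nat k *\<^sub>R r"
  shows "f = 0"
  using inf_scaleR_nat_eq_0 [OF assms(1-3), of k] assms(4) by (simp add: inf_absorb1)

lemma disj_scaleR_nat:
  assumes "0 \<le> d" "disj d b"
  shows "disj (of_nat k *\<^sub>R d) b"
proof -
  have "inf (rabs b) d = 0" using assms by (simp add: disj_nonneg_iff inf_commute)
  then have "inf (rabs b) (of_nat k *\<^sub>R d) = 0"
    using assms(1) by (intro inf_scaleR_nat_eq_0 rabs_nonneg)
  then show ?thesis using assms(1) by (simp add: disj_nonneg_iff scaleR_nonneg_nonneg inf_commute)
qed

lemma nonpos_if_multiples_bounded:
  fixes r a :: "'a::{ordered_real_vector, conditionally_complete_lattice}"
  assumes "\<And>n::nat. of_nat n *\<^sub>R r \<le> a"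
  shows "r \<le> 0"
proof -
  let ?s = "SUP n::nat. of_nat n *\<^sub>R r"
  have bdd: "bdd_above (range (\<lambda>n::nat. of_nat n *\<^sub>R r))"
    using assms by (rule bdd_aboveI2)
  have "of_nat n *\<^sub>R r \<le> ?s - r" for n
    using cSUP_upper [OF UNIV_I bdd, of "Suc n"]
    by (simp add: scaleR_left_distrib le_diff_eq add.commute)
  then have "?s \<le> ?s - r" by (intro cSUP_least) auto
  then show ?thesis by (simp add: le_diff_eq)
qed

text \<open>\<open>(n r - a)\<^sup>+\<close> is disjoint from \<open>(a - n r)\<^sup>+ \<ge> r\<close> and lies below \<open>n r\<close>, so it vanishes and
  \<open>n r \<le> a\<close> for all \<open>n\<close>.\<close>

lemma nonpos_if_le_sup_diff_multiples:
  fixes r p a :: "'a::{ordered_real_vector, conditionally_complete_lattice}"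
  assumes "0 \<le> r" "r \<le> p" "\<And>n::nat. r \<le> sup (a - of_nat n *\<^sub>R p) 0"
  shows "r \<le> 0"
proof (rule nonpos_if_multiples_bounded [where a = "sup a 0"])
  fix n :: nat
  let ?nr = "of_nat n *\<^sub>R r"
  have nr: "0 \<le> ?nr" using assms(1) by (simp add: scaleR_nonneg_nonneg)
  have "a - of_nat n *\<^sub>R p \<le> sup a 0 - ?nr"
    using assms(2) by (intro diff_mono scaleR_left_mono) simp_all
  then have "sup (a - of_nat n *\<^sub>R p) 0 \<le> sup (sup a 0 - ?nr) 0"
    by (rule sup_mono) simp
  with assms(3) [of n] have "r \<le> sup (sup a 0 - ?nr) 0"
    by (rule order_trans)
  then have "inf (sup (?nr - sup a 0) 0) r \<le> inf (sup (?nr - sup a 0) 0) (sup (sup a 0 - ?nr) 0)"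
    by (rule inf_mono [OF order_refl])
  also have "\<dots> = 0"
    using riesz.inf_pos_part_neg_part [of "sup a 0 - ?nr"] by (simp add: inf_commute)
  finally have disj: "inf (sup (?nr - sup a 0) 0) r = 0"
    using assms(1) by (intro order.antisym le_infI) simp_all
  have le: "sup (?nr - sup a 0) 0 \<le> ?nr"
    using nr by (intro le_supI) (simp_all add: diff_le_eq le_supI2)
  have "sup (?nr - sup a 0) 0 = 0"
    by (rule eq_0_if_disjoint_le_scaleR_nat [OF _ assms(1) disj le]) simp
  then show "?nr \<le> sup a 0" by (metis diff_le_0_iff_le sup.cobounded1)
qed

lemma inf_cSup_distrib:
  fixes x :: "'a::{ordered_real_vector, conditionally_complete_lattice}"
  assumes "D \<noteq> {}" "bdd_above D"
  shows "inf x (Sup D) = (SUP d\<in>D. inf x d)"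
proof (rule order.antisym)
  let ?t = "SUP d\<in>D. inf x d"
  have bdd: "bdd_above ((\<lambda>d. inf x d) ` D)" by (rule bdd_aboveI2 [of _ _ x]) simp
  have "d \<le> ?t + sup (Sup D - x) 0" if "d \<in> D" for d
  proof -
    have "d = inf x d + sup (d - x) 0" by (simp add: riesz.inf_add_sup_diff_0)
    also have "\<dots> \<le> ?t + sup (Sup D - x) 0"
      using that assms bdd
      by (intro add_mono sup_mono diff_right_mono cSUP_upper cSup_upper order_refl)
    finally show ?thesis .
  qed
  then have "Sup D \<le> ?t + sup (Sup D - x) 0" using assms(1) by (intro cSup_least)
  then have "Sup D - sup (Sup D - x) 0 \<le> ?t" by (simp only: diff_le_eq)
  moreover have "inf x (Sup D) = Sup D - sup (Sup D - x) 0"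
    using riesz.inf_add_sup_diff_0 [of x "Sup D"] by (simp only: eq_diff_eq)
  ultimately show "inf x (Sup D) \<le> ?t" by simp
  show "?t \<le> inf x (Sup D)"
    using assms by (intro cSUP_least) (auto intro: le_infI2 cSup_upper)
qed

lemma le_sup_diff_cSup:
  fixes r c :: "'a::{ordered_real_vector, conditionally_complete_lattice}"
  assumes "D \<noteq> {}" "bdd_above D" "\<And>v. v \<in> D \<Longrightarrow> r \<le> sup (c - v) 0"
  shows "r \<le> sup (c - Sup D) 0"
proof -
  have "inf c v \<le> c - r" if "v \<in> D" for v
    using assms(3) [OF that] riesz.diff_inf_eq_sup_diff_0 [of c v]
    by (metis add.commute le_diff_eq)
  then have "inf c (Sup D) \<le> c - r" using assms(1,2) by (simp add: inf_cSup_distrib cSUP_least)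
  then show ?thesis using riesz.diff_inf_eq_sup_diff_0 [of c "Sup D"]
    by (metis add.commute le_diff_eq)
qed

lemma disjoint_if_inf_multiples_le:
  fixes d a t :: "'a::{ordered_real_vector, conditionally_complete_lattice}"
  assumes "0 \<le> d" "0 \<le> a" "\<And>k::nat. inf (of_nat k *\<^sub>R d) t \<le> a"
  shows "inf (sup (t - a) 0) d = 0"
proof -
  let ?e = "inf (sup (t - a) 0) d"
  have e: "0 \<le> ?e" using assms(1) by simp
  have "?e \<le> 0"
  proof (rule nonpos_if_multiples_bounded)
    fix k :: nat
    let ?ke = "of_nat k *\<^sub>R ?e"
    have ke: "0 \<le> ?ke" using e by (simp add: scaleR_nonneg_nonneg)
    have "inf ?ke t \<le> inf (of_nat k *\<^sub>R d) t"
      by (intro inf_mono scaleR_left_mono) simp_all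
    also have "\<dots> \<le> a" by (rule assms(3))
    finally have "sup (inf ?ke t - a) 0 = 0" by (simp add: sup_absorb2)
    moreover have "inf (?ke - a) (t - a) = inf ?ke t - a"
      using riesz.add_inf_distrib_right [of ?ke t "- a"] by simp
    ultimately have "inf (sup (?ke - a) 0) (sup (t - a) 0) = 0"
      by (simp add: riesz.sup_inf_distrib2 [symmetric])
    then have "inf (sup (?ke - a) 0) ?e \<le> 0"
      by (metis inf_mono order_refl inf_le1)
    then have disj: "inf (sup (?ke - a) 0) ?e = 0"
      using e by (intro order.antisym le_infI) simp_all
    have le: "sup (?ke - a) 0 \<le> of_nat k *\<^sub>R ?e"
      using ke assms(2) by (intro le_supI) (simp_all add: diff_le_eq le_supI2 add_increasing2)
    have "sup (?ke - a) 0 = 0"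
      by (rule eq_0_if_disjoint_le_scaleR_nat [OF _ e disj le]) simp
    then show "?ke \<le> a" by (metis diff_le_0_iff_le sup.cobounded1)
  qed
  then show ?thesis using e by (rule order.antisym)
qed

lemma inf_le_sup_diff_if_disjoint:
  fixes d s q a :: "'a::{ordered_real_vector, lattice}"
  assumes "0 \<le> d" "0 \<le> s" "inf (sup (q + s - a) 0) d = 0"
  shows "inf d s \<le> sup (a - q) 0"
proof -
  let ?e = "sup (q + s - a) 0"
  have "s = (inf a (q + s) - q) + ?e"
    using riesz.inf_add_sup_diff_0 [of a "q + s"] by (simp add: algebra_simps)
  also have "inf a (q + s) - q \<le> sup (a - q) 0"
    by (simp add: diff_right_mono le_supI1)
  finally have "inf d s \<le> inf d (sup (a - q) 0 + ?e)"
    by (intro inf_mono order_refl) (simp add: add_right_mono)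
  also have "\<dots> \<le> inf d (sup (a - q) 0) + inf d ?e"
    using assms(1) by (intro riesz.inf_add_le_add_inf) simp_all
  also have "inf d ?e = 0" using assms(3) by (simp add: inf_commute)
  finally show ?thesis by (simp add: le_infI2)
qed

lemma riesz_subspace_add: "riesz_subspace X \<Longrightarrow> a \<in> X \<Longrightarrow> b \<in> X \<Longrightarrow> a + b \<in> X"
  by (simp add: riesz_subspace_def)

lemma riesz_subspace_uminus: "riesz_subspace X \<Longrightarrow> a \<in> X \<Longrightarrow> - a \<in> X"
proof -
  assume "riesz_subspace X" "a \<in> X"
  then have "(- 1) *\<^sub>R a \<in> X" unfolding riesz_subspace_def by blast
  then show "- a \<in> X" by simp
qed

lemma riesz_subspace_diff: "riesz_subspace X \<Longrightarrow> a \<in> X \<Longrightarrow> b \<in> X \<Longrightarrow> a - b \<in> X"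
  using riesz_subspace_add [of X a "- b"] riesz_subspace_uminus [of X b] by simp

lemma riesz_subspace_sup: "riesz_subspace X \<Longrightarrow> a \<in> X \<Longrightarrow> b \<in> X \<Longrightarrow> sup a b \<in> X"
  by (simp add: riesz_subspace_def)

lemma riesz_subspace_inf: "riesz_subspace X \<Longrightarrow> a \<in> X \<Longrightarrow> b \<in> X \<Longrightarrow> inf a b \<in> X"
  unfolding riesz.inf_eq_neg_sup by (intro riesz_subspace_uminus riesz_subspace_sup)

lemma order_dense_gap:
  assumes "order_dense X" "a < b"
  obtains e where "e \<in> X" "0 < e" "a + e \<le> b"
proof -
  have "0 < b - a" using assms(2) by simp
  with assms(1) obtain e where "e \<in> X" "0 < e" "e \<le> b - a" unfolding order_dense_def by blast
  then show ?thesis by (intro that) (simp_all add: le_diff_eq add.commute)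
qed

lemma cSup_mem_if_dedekind_complete:
  fixes X :: "'a::{ordered_real_vector, conditionally_complete_lattice} set"
  assumes "riesz_subspace X" "order_dense X" "dedekind_complete_in X"
    and "D \<subseteq> X" "D \<noteq> {}" "y \<in> X" "\<And>d. d \<in> D \<Longrightarrow> d \<le> y"
  shows "Sup D \<in> X"
proof -
  obtain s where "is_lub_in X D s"
    using assms(3-7) unfolding dedekind_complete_in_def by blast
  then have s: "s \<in> X" "\<And>d. d \<in> D \<Longrightarrow> d \<le> s"
    "\<And>t. t \<in> X \<Longrightarrow> (\<And>d. d \<in> D \<Longrightarrow> d \<le> t) \<Longrightarrow> s \<le> t"
    unfolding is_lub_in_def by blast+
  have bdd: "bdd_above D" using assms(7) by (rule bdd_aboveI)
  have "Sup D \<le> s" using assms(5) s(2) by (rule cSup_least)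
  moreover have "\<not> Sup D < s"
  proof
    assume "Sup D < s"
    with assms(2) obtain e where e: "e \<in> X" "0 < e" "Sup D + e \<le> s" by (rule order_dense_gap)
    have "d \<le> s - e" if "d \<in> D" for d
      using order_trans [OF add_right_mono [OF cSup_upper [OF that bdd]] e(3)]
      by (simp add: le_diff_eq)
    then have "s \<le> s - e" using s assms(1) e(1) by (simp add: riesz_subspace_diff)
    with e(2) show False by simp
  qed
  ultimately show ?thesis using s(1) by (simp add: less_le)
qed

lemma cSup_subspace_below:
  fixes X :: "'a::{ordered_real_vector, conditionally_complete_lattice} set"
  assumes "riesz_subspace X" "order_dense X" "c \<in> X" "c \<le> a"
  shows "Sup {w \<in> X. w \<le> a} = a"
proof -
  let ?E = "{w \<in> X. w \<le> a}"
  have ne: "?E \<noteq> {}" using assms(3,4) by auto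
  have bdd: "bdd_above ?E" by (rule bdd_aboveI [of _ a]) simp
  have "Sup ?E \<le> a" using ne by (rule cSup_least) simp
  moreover have "\<not> Sup ?E < a"
  proof
    assume "Sup ?E < a"
    with assms(2) obtain e where e: "e \<in> X" "0 < e" "Sup ?E + e \<le> a" by (rule order_dense_gap)
    have "w \<le> Sup ?E - e" if w: "w \<in> ?E" for w
    proof -
      have "w + e \<le> a" by (rule order_trans [OF add_right_mono [OF cSup_upper [OF w bdd]] e(3)])
      then have "w + e \<in> ?E" using w e(1) assms(1) by (simp add: riesz_subspace_add)
      then show ?thesis using bdd by (simp add: cSup_upper le_diff_eq)
    qed
    then have "Sup ?E \<le> Sup ?E - e" using ne by (intro cSup_least) auto
    with e(2) show False by simp
  qed
  ultimately show ?thesis by (simp add: less_le)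
qed

section \<open>Meets with the tails of a positive series\<close>

lemma sum_lessThan_add_atLeastAtMost:
  fixes x :: "nat \<Rightarrow> 'a::comm_monoid_add"
  shows "(\<Sum>k<n. x k) + (\<Sum>k=n..N. x k) = (\<Sum>k\<in>{..<n} \<union> {n..N}. x k)"
  by (subst sum.union_disjoint) auto

lemma sum_atLeastAtMost_0_le:
  fixes x :: "nat \<Rightarrow> 'a::ordered_comm_monoid_add"
  assumes "\<And>k. 0 \<le> x k"
  shows "(\<Sum>k=0..N. x k) \<le> (\<Sum>k<n. x k) + (\<Sum>k=n..N. x k)"
  unfolding sum_lessThan_add_atLeastAtMost using assms by (intro sum_mono2) auto

lemma sum_lessThan_add_le:
  fixes x :: "nat \<Rightarrow> 'a::ordered_comm_monoid_add"
  assumes "\<And>k. 0 \<le> x k"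
  shows "(\<Sum>k<n. x k) + (\<Sum>k=n..N. x k) \<le> (\<Sum>k=0..max n N. x k)"
  unfolding sum_lessThan_add_atLeastAtMost using assms by (intro sum_mono2) auto

text \<open>\<open>inf_tail x n v\<close> is \<open>v \<wedge> R\<^sub>n\<close>: the tail \<open>R\<^sub>n\<close> may exist only in the sup-completion,
  but its meet with \<open>v\<close> is the supremum of the meets of \<open>v\<close> with the partial sums, which exists.\<close>

definition inf_tail :: "(nat \<Rightarrow> 'a::{ordered_real_vector, conditionally_complete_lattice}) \<Rightarrow> nat \<Rightarrow> 'a \<Rightarrow> 'a"
  where "inf_tail x n v = (SUP N. inf v (\<Sum>k=n..N. x k))"

lemma bdd_above_inf_image: "bdd_above ((\<lambda>a. inf (v :: 'a::lattice) (f a)) ` A)"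
  by (rule bdd_aboveI2 [of _ _ v]) simp

lemma inf_tail_upper: "inf v (\<Sum>k=n..N. x k) \<le> inf_tail x n v"
  unfolding inf_tail_def by (rule cSUP_upper [OF UNIV_I bdd_above_inf_image])

lemma inf_tail_least: "(\<And>N. inf v (\<Sum>k=n..N. x k) \<le> w) \<Longrightarrow> inf_tail x n v \<le> w"
  unfolding inf_tail_def by (rule cSUP_least) auto

lemma inf_tail_le: "inf_tail x n v \<le> v"
  by (rule inf_tail_least) simp

lemma inf_tail_nonneg: "(\<And>k. 0 \<le> x k) \<Longrightarrow> 0 \<le> v \<Longrightarrow> 0 \<le> inf_tail x n v"
  by (rule order_trans [OF _ inf_tail_upper [of v x n n]]) simp

lemma inf_tail_mono:
  assumes "v \<le> w"
  shows "inf_tail x n v \<le> inf_tail x n w"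
proof (rule inf_tail_least)
  fix N
  show "inf v (\<Sum>k=n..N. x k) \<le> inf_tail x n w"
    using assms inf_tail_upper [of w x n N] by (meson inf_mono order_refl order_trans)
qed

lemma inf_tail_Suc_le:
  assumes "\<And>k. 0 \<le> x k"
  shows "inf_tail x (Suc n) v \<le> inf_tail x n v"
proof (rule inf_tail_least)
  fix N
  have "(\<Sum>k=Suc n..N. x k) \<le> (\<Sum>k=n..N. x k)" using assms by (intro sum_mono2) auto
  then show "inf v (\<Sum>k=Suc n..N. x k) \<le> inf_tail x n v"
    using inf_tail_upper [of v x n N] by (meson inf_mono order_refl order_trans)
qed

lemma inf_tail_add_le:
  assumes "0 \<le> a"
  shows "inf_tail x n (a + v) \<le> a + inf_tail x n v"
proof (rule inf_tail_least)
  fix N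
  have "inf (a + v) (\<Sum>k=n..N. x k) \<le> inf (a + v) (a + (\<Sum>k=n..N. x k))"
    using assms by (intro inf_mono) (simp_all add: add_increasing)
  also have "\<dots> = a + inf v (\<Sum>k=n..N. x k)" by (simp add: riesz.add_inf_distrib_left)
  also have "\<dots> \<le> a + inf_tail x n v" by (intro add_left_mono inf_tail_upper)
  finally show "inf (a + v) (\<Sum>k=n..N. x k) \<le> a + inf_tail x n v" .
qed

lemma inf_tail_scaleR_le:
  assumes "1 \<le> c" "\<And>k. 0 \<le> x k"
  shows "inf_tail x n (c *\<^sub>R v) \<le> c *\<^sub>R inf_tail x n v"
proof (rule inf_tail_least)
  fix N
  let ?S = "\<Sum>k=n..N. x k"
  have "?S \<le> c *\<^sub>R ?S"
    using scaleR_right_mono [OF assms(1), of ?S] assms(2) by (simp add: sum_nonneg)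
  then have "inf (c *\<^sub>R v) ?S \<le> c *\<^sub>R inf v ?S"
    using assms(1) by (simp add: scaleR_inf_distrib le_infI2)
  also have "\<dots> \<le> c *\<^sub>R inf_tail x n v"
    using assms(1) by (intro scaleR_left_mono inf_tail_upper) simp
  finally show "inf (c *\<^sub>R v) ?S \<le> c *\<^sub>R inf_tail x n v" .
qed

lemma inf_tail_0_le:
  assumes "\<And>k. 0 \<le> x k"
  shows "inf_tail x 0 v \<le> (\<Sum>k<n. x k) + inf_tail x n v"
proof (rule inf_tail_least)
  fix N
  let ?W = "\<Sum>k<n. x k"
  have "inf v (\<Sum>k=0..N. x k) \<le> inf (?W + v) (?W + (\<Sum>k=n..N. x k))"
    using assms by (intro inf_mono sum_atLeastAtMost_0_le) (simp_all add: sum_nonneg add_increasing)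
  also have "\<dots> = ?W + inf v (\<Sum>k=n..N. x k)" by (simp add: riesz.add_inf_distrib_left)
  also have "\<dots> \<le> ?W + inf_tail x n v" by (intro add_left_mono inf_tail_upper)
  finally show "inf v (\<Sum>k=0..N. x k) \<le> ?W + inf_tail x n v" .
qed

lemma mem_sc_tail_sum: "w \<in> sc_tail_sum X x n \<longleftrightarrow> w \<in> X \<and> (\<exists>N. w \<le> (\<Sum>k=n..N. x k))"
  by (auto simp: sc_tail_sum_def sc_emb_def)

lemma mem_sc_plus_sc_emb:
  "w \<in> sc_plus B (sc_emb X u) \<longleftrightarrow> (\<exists>b c. w = b + c \<and> b \<in> B \<and> c \<in> X \<and> c \<le> u)"
  by (auto simp: sc_plus_def sc_emb_def)

lemma up_directed_sc_tail_sum: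
  assumes "riesz_subspace X" "\<And>k. 0 \<le> x k"
  shows "up_directed (sc_tail_sum X x n)"
  unfolding up_directed_def
proof (intro conjI ballI)
  have "0 \<in> sc_tail_sum X x n"
    using assms by (auto simp: mem_sc_tail_sum riesz_subspace_def sum_nonneg)
  then show "sc_tail_sum X x n \<noteq> {}" by blast
  fix a b assume "a \<in> sc_tail_sum X x n" "b \<in> sc_tail_sum X x n"
  then obtain Na Nb where ab: "a \<in> X" "b \<in> X" "a \<le> (\<Sum>k=n..Na. x k)" "b \<le> (\<Sum>k=n..Nb. x k)"
    by (auto simp: mem_sc_tail_sum)
  have "(\<Sum>k=n..N. x k) \<le> (\<Sum>k=n..max Na Nb. x k)" if "N \<le> max Na Nb" for N
    using that assms(2) by (intro sum_mono2) auto
  then have "sup a b \<in> sc_tail_sum X x n"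
    using ab assms(1) unfolding mem_sc_tail_sum
    by (intro conjI riesz_subspace_sup exI [of _ "max Na Nb"] le_supI)
      (auto intro: order_trans)
  then show "\<exists>c\<in>sc_tail_sum X x n. a \<le> c \<and> b \<le> c" by (intro bexI [of _ "sup a b"]) auto
qed

lemma up_directed_inf_image:
  fixes y :: "'a::lattice"
  assumes "up_directed A"
  shows "up_directed ((\<lambda>a. inf y a) ` A)"
  unfolding up_directed_def
proof (intro conjI ballI)
  show "(\<lambda>a. inf y a) ` A \<noteq> {}" using assms by (simp add: up_directed_def)
  fix a' b' assume "a' \<in> (\<lambda>a. inf y a) ` A" "b' \<in> (\<lambda>a. inf y a) ` A"
  then obtain a b where ab: "a \<in> A" "b \<in> A" "a' = inf y a" "b' = inf y b" by blast
  with assms obtain c where "c \<in> A" "a \<le> c" "b \<le> c" unfolding up_directed_def by blast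
  with ab show "\<exists>c'\<in>(\<lambda>a. inf y a) ` A. a' \<le> c' \<and> b' \<le> c'"
    by (intro bexI [of _ "inf y c"]) (auto intro: le_infI2)
qed

lemma cSup_inf_sc_tail_sum:
  fixes X :: "'a::{ordered_real_vector, conditionally_complete_lattice} set"
  assumes "riesz_subspace X" "order_dense X" "\<And>k. 0 \<le> x k" "v \<in> X"
  shows "(SUP w\<in>sc_tail_sum X x n. inf v w) = inf_tail x n v"
proof (rule order.antisym)
  have ne: "sc_tail_sum X x n \<noteq> {}"
    using up_directed_sc_tail_sum [OF assms(1,3)] by (simp add: up_directed_def)
  show "(SUP w\<in>sc_tail_sum X x n. inf v w) \<le> inf_tail x n v"
  proof (rule cSUP_least [OF ne])
    fix w assume "w \<in> sc_tail_sum X x n"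
    then obtain N where "w \<le> (\<Sum>k=n..N. x k)" by (auto simp: mem_sc_tail_sum)
    then show "inf v w \<le> inf_tail x n v"
      using inf_tail_upper [of v x n N] by (meson inf_mono order_refl order_trans)
  qed
  show "inf_tail x n v \<le> (SUP w\<in>sc_tail_sum X x n. inf v w)"
  proof (rule inf_tail_least)
    fix N
    let ?E = "{w \<in> X. w \<le> (\<Sum>k=n..N. x k)}"
    have E: "0 \<in> ?E" using assms(1,3) by (simp add: riesz_subspace_def sum_nonneg)
    then have "inf v (\<Sum>k=n..N. x k) = inf v (Sup ?E)"
      using cSup_subspace_below [OF assms(1,2), of 0 "\<Sum>k=n..N. x k"] by simp
    also have "\<dots> = (SUP w\<in>?E. inf v w)"
      using E by (intro inf_cSup_distrib) (auto intro: bdd_aboveI)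
    also have "\<dots> \<le> (SUP w\<in>sc_tail_sum X x n. inf v w)"
      using E by (intro cSUP_subset_mono bdd_above_inf_image) (auto simp: mem_sc_tail_sum)
    finally show "inf v (\<Sum>k=n..N. x k) \<le> (SUP w\<in>sc_tail_sum X x n. inf v w)" .
  qed
qed

lemma sc_eq_singleton_cSup:
  fixes X :: "'a::{ordered_real_vector, conditionally_complete_lattice} set"
  assumes "D \<subseteq> X" "up_directed D" "bdd_above D" "Sup D \<in> X"
  shows "sc_eq X {Sup D} D"
proof -
  have "D \<noteq> {}" using assms(2) by (simp add: up_directed_def)
  then show ?thesis using assms unfolding sc_eq_def by (simp add: up_directed_def inf_cSup_distrib)
qed

lemma inf_tail_sc_eq:
  fixes X :: "'a::{ordered_real_vector, conditionally_complete_lattice} set"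
  assumes "riesz_subspace X" "order_dense X" "dedekind_complete_in X" "\<And>k. 0 \<le> x k" "y \<in> X"
  shows "inf_tail x n y \<in> X" and "sc_eq X {inf_tail x n y} (sc_inf {y} (sc_tail_sum X x n))"
proof -
  let ?D = "(\<lambda>w. inf y w) ` sc_tail_sum X x n"
  have D: "sc_inf {y} (sc_tail_sum X x n) = ?D" by (auto simp: sc_inf_def)
  have Sup: "Sup ?D = inf_tail x n y" using cSup_inf_sc_tail_sum [OF assms(1,2,4,5)] .
  have sub: "?D \<subseteq> X" using assms(1,5) by (auto simp: mem_sc_tail_sum intro: riesz_subspace_inf)
  have dir: "up_directed ?D" by (intro up_directed_inf_image up_directed_sc_tail_sum assms(1,4))
  then have "?D \<noteq> {}" by (simp add: up_directed_def)
  then have "Sup ?D \<in> X"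
    by (intro cSup_mem_if_dedekind_complete [OF assms(1-3) sub _ assms(5)]) auto
  then show mem: "inf_tail x n y \<in> X" by (simp only: Sup)
  have "bdd_above ?D" by (rule bdd_aboveI2 [of _ _ y]) simp
  then show "sc_eq X {inf_tail x n y} (sc_inf {y} (sc_tail_sum X x n))"
    using sc_eq_singleton_cSup [OF sub dir] Sup mem D by simp
qed

lemma order_conv_squeeze:
  fixes z w :: "nat \<Rightarrow> 'a::{ordered_real_vector, conditionally_complete_lattice}"
  assumes "decseq z" "\<And>n. l \<le> z n" "\<And>n. z n \<le> l + w n" "(INF n. w n) = 0"
  shows "order_conv z l"
  unfolding order_conv_def
proof (intro exI [of _ "\<lambda>n. z n - l"] conjI allI)
  show "decseq (\<lambda>n. z n - l)" using assms(1) by (simp add: decseq_def diff_right_mono)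
  show "0 \<le> z n - l" for n using assms(2) by simp
  then show "rabs (z n - l) \<le> z n - l" for n by (simp add: rabs_eq_self)
  have "(INF n. z n - l) \<le> (INF n. w n)"
    using assms(3) \<open>\<And>n. 0 \<le> z n - l\<close>
    by (intro cINF_mono bdd_belowI2 [of _ 0]) (auto simp: diff_le_eq add.commute)
  moreover have "0 \<le> (INF n. z n - l)" using \<open>\<And>n. 0 \<le> z n - l\<close> by (intro cINF_greatest) auto
  ultimately show "(INF n. z n - l) = 0" using assms(4) by simp
qed

section \<open>A series summing to \<open>\<infinity>\<^sub>B + u\<close>\<close>

locale series_eq_infty_band_plus =
  fixes X B :: "'a::{ordered_real_vector, conditionally_complete_lattice} set"
    and x :: "nat \<Rightarrow> 'a" and u :: 'a
  assumes subspace: "riesz_subspace X"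
    and dense: "order_dense X"
    and nonneg: "\<And>k. 0 \<le> x k"
    and band: "band_of X B"
    and series_eq: "sc_eq X (sc_tail_sum X x 0) (sc_plus (sc_infty B) (sc_emb X u))"
begin

lemma inf_tail_0_eq: "v \<in> X \<Longrightarrow> inf_tail x 0 v = (SUP w\<in>sc_plus B (sc_emb X u). inf v w)"
  using series_eq cSup_inf_sc_tail_sum [OF subspace dense nonneg]
  unfolding sc_eq_def sc_infty_def by simp

lemma below_u_exists:
  obtains c where "c \<in> X" "c \<le> u"
  using series_eq by (auto simp: sc_eq_def up_directed_def mem_sc_plus_sc_emb sc_infty_def)

lemma band_scaleR: "p \<in> B \<Longrightarrow> c *\<^sub>R p \<in> B"
  using band by (simp add: band_of_def)

lemma inf_tail_0_band:
  assumes "p \<in> B" "0 \<le> p"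
  shows "inf_tail x 0 p = p"
proof (rule order.antisym [OF inf_tail_le])
  let ?g = "inf_tail x 0 p"
  have pX: "p \<in> X" using band assms(1) by (auto simp: band_of_def)
  obtain c where c: "c \<in> X" "c \<le> u" by (rule below_u_exists)
  have "p - ?g \<le> 0"
  proof (rule nonpos_if_le_sup_diff_multiples [where p = p and a = "- c"])
    show "0 \<le> p - ?g" using inf_tail_le [of x 0 p] by simp
    show "p - ?g \<le> p" using inf_tail_nonneg [OF nonneg assms(2)] by simp
    fix n :: nat
    have "of_nat (Suc n) *\<^sub>R p + c \<in> sc_plus B (sc_emb X u)"
      using c band_scaleR [OF assms(1)] by (auto simp: mem_sc_plus_sc_emb)
    then have "inf p (of_nat (Suc n) *\<^sub>R p + c) \<le> ?g"
      unfolding inf_tail_0_eq [OF pX] by (intro cSUP_upper bdd_above_inf_image)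
    then have "p - ?g \<le> p - inf p (of_nat (Suc n) *\<^sub>R p + c)" by (rule diff_left_mono)
    also have "\<dots> = sup (p - (of_nat (Suc n) *\<^sub>R p + c)) 0"
      by (rule riesz.diff_inf_eq_sup_diff_0)
    also have "p - (of_nat (Suc n) *\<^sub>R p + c) = - c - of_nat n *\<^sub>R p"
      by (simp add: scaleR_left_distrib algebra_simps)
    finally show "p - ?g \<le> sup (- c - of_nat n *\<^sub>R p) 0" .
  qed
  then show "p \<le> ?g" by simp
qed

lemma inf_tail_0_disjoint:
  assumes "d \<in> X" "0 \<le> d" "\<forall>b\<in>B. disj d b"
  shows "inf_tail x 0 d = inf d (sup u 0)"
proof (rule order.antisym)
  let ?BU = "sc_plus B (sc_emb X u)"
  obtain c where c: "c \<in> X" "c \<le> u" by (rule below_u_exists)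
  have "0 \<in> B" using band by (simp add: band_of_def)
  then have below_u: "{w \<in> X. w \<le> u} \<subseteq> ?BU" by (force simp: mem_sc_plus_sc_emb)
  with c have ne: "?BU \<noteq> {}" by blast
  show "inf_tail x 0 d \<le> inf d (sup u 0)"
    unfolding inf_tail_0_eq [OF assms(1)]
  proof (rule cSUP_least [OF ne])
    fix w assume "w \<in> ?BU"
    then obtain b c where w: "w = b + c" "b \<in> B" "c \<le> u" by (auto simp: mem_sc_plus_sc_emb)
    have "inf d w \<le> inf d (rabs b + sup c 0)"
      unfolding w rabs_def by (intro inf_mono add_mono) simp_all
    also have "\<dots> \<le> inf d (rabs b) + inf d (sup c 0)"
      using assms(2) rabs_nonneg by (intro riesz.inf_add_le_add_inf) simp_all
    also have "inf d (rabs b) = 0" using assms(2,3) w(2) by (simp add: disj_nonneg_iff)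
    also have "inf d (sup c 0) \<le> inf d (sup u 0)" using w(3) by (intro inf_mono sup_mono) simp_all
    finally show "inf d w \<le> inf d (sup u 0)" by simp
  qed
  have "inf d u = inf d (Sup {w \<in> X. w \<le> u})"
    using cSup_subspace_below [OF subspace dense c] by simp
  also have "\<dots> = (SUP w\<in>{w \<in> X. w \<le> u}. inf d w)"
    using c by (intro inf_cSup_distrib) (auto intro: bdd_aboveI)
  also have "\<dots> \<le> inf_tail x 0 d"
    unfolding inf_tail_0_eq [OF assms(1)] using c below_u
    by (intro cSUP_subset_mono bdd_above_inf_image) auto
  finally have "inf d u \<le> inf_tail x 0 d" .
  then show "inf d (sup u 0) \<le> inf_tail x 0 d"
    using assms(2) inf_tail_nonneg [OF nonneg assms(2)]
    by (simp add: riesz.inf_sup_distrib1 inf_absorb2)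
qed

lemma inf_tail_band:
  assumes "p \<in> B" "0 \<le> p"
  shows "inf_tail x n p = p"
proof (rule order.antisym [OF inf_tail_le])
  let ?W = "\<Sum>k<n. x k"
  have "of_nat k *\<^sub>R (p - inf_tail x n p) \<le> ?W" for k
  proof (cases "k = 0")
    case True
    then show ?thesis using nonneg by (simp add: sum_nonneg)
  next
    case False
    have "of_nat k *\<^sub>R p = inf_tail x 0 (of_nat k *\<^sub>R p)"
      using band_scaleR [OF assms(1)] assms(2) by (simp add: inf_tail_0_band scaleR_nonneg_nonneg)
    also have "\<dots> \<le> ?W + inf_tail x n (of_nat k *\<^sub>R p)" by (rule inf_tail_0_le [OF nonneg])
    also have "\<dots> \<le> ?W + of_nat k *\<^sub>R inf_tail x n p"
      using False by (intro add_left_mono inf_tail_scaleR_le nonneg) simp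
    finally show ?thesis by (simp add: scaleR_diff_right algebra_simps)
  qed
  then have "p - inf_tail x n p \<le> 0" by (rule nonpos_if_multiples_bounded)
  then show "p \<le> inf_tail x n p" by simp
qed

lemma inf_tail_disjoint_le:
  assumes "d \<in> X" "0 \<le> d" "\<forall>b\<in>B. disj d b"
  shows "inf_tail x n d \<le> sup (sup u 0 - (\<Sum>k<n. x k)) 0"
proof (rule inf_tail_least)
  fix N
  let ?a = "sup u 0" and ?W = "\<Sum>k<n. x k" and ?S = "\<Sum>k=n..N. x k"
  have "inf (of_nat k *\<^sub>R d) (?W + ?S) \<le> ?a" for k
  proof -
    have kd: "of_nat k *\<^sub>R d \<in> X" "0 \<le> of_nat k *\<^sub>R d" "\<forall>b\<in>B. disj (of_nat k *\<^sub>R d) b"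
      using assms subspace by (auto simp: riesz_subspace_def scaleR_nonneg_nonneg disj_scaleR_nat)
    have "inf (of_nat k *\<^sub>R d) (?W + ?S) \<le> inf (of_nat k *\<^sub>R d) (\<Sum>j=0..max n N. x j)"
      using nonneg by (intro inf_mono sum_lessThan_add_le) simp_all
    also have "\<dots> \<le> inf_tail x 0 (of_nat k *\<^sub>R d)" by (rule inf_tail_upper)
    also have "\<dots> = inf (of_nat k *\<^sub>R d) ?a" using kd by (rule inf_tail_0_disjoint)
    finally show ?thesis by (simp add: le_infI2)
  qed
  then have "inf (sup (?W + ?S - ?a) 0) d = 0"
    by (rule disjoint_if_inf_multiples_le [OF assms(2) sup_ge2])
  then show "inf d ?S \<le> sup (?a - ?W) 0"
    using assms(2) nonneg by (intro inf_le_sup_diff_if_disjoint) (simp_all add: sum_nonneg)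
qed

lemma Inf_inf_tail_disjoint:
  assumes "d \<in> X" "0 \<le> d" "\<forall>b\<in>B. disj d b"
  shows "(INF n. inf_tail x n d) = 0"
proof -
  let ?a = "sup u 0" and ?r = "INF n. inf_tail x n d"
  have bdd: "bdd_below (range (\<lambda>n. inf_tail x n d))"
    using inf_tail_nonneg [OF nonneg assms(2)] by (intro bdd_belowI2)
  have r0: "0 \<le> ?r" using inf_tail_nonneg [OF nonneg assms(2)] by (intro cINF_greatest) auto
  have rd: "?r \<le> d" using cINF_lower [OF bdd UNIV_I, of 0] inf_tail_le [of x 0 d] by (rule order_trans)
  have "?r \<le> 0"
  proof (rule nonpos_if_le_sup_diff_multiples [OF r0 rd])
    fix k :: nat
    let ?kd = "of_nat k *\<^sub>R d"
    have "?r \<le> sup (?a - inf ?kd (\<Sum>j=0..N. x j)) 0" for N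
    proof -
      have "?r \<le> inf_tail x (Suc N) d" by (rule cINF_lower [OF bdd UNIV_I])
      also have "\<dots> \<le> sup (?a - (\<Sum>j<Suc N. x j)) 0" by (rule inf_tail_disjoint_le [OF assms])
      also have "\<dots> \<le> sup (?a - inf ?kd (\<Sum>j=0..N. x j)) 0"
        by (intro sup_mono diff_left_mono) (simp_all add: atLeast0AtMost lessThan_Suc_atMost)
      finally show ?thesis .
    qed
    then have "?r \<le> sup (?a - inf_tail x 0 ?kd) 0"
      unfolding inf_tail_def by (intro le_sup_diff_cSup bdd_above_inf_image) auto
    also have "inf_tail x 0 ?kd = inf ?kd ?a"
      using assms subspace
      by (intro inf_tail_0_disjoint) (auto simp: riesz_subspace_def scaleR_nonneg_nonneg disj_scaleR_nat)
    also have "sup (?a - inf ?kd ?a) 0 = sup (?a - ?kd) 0"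
      using riesz.diff_inf_eq_sup_diff_0 [of ?a ?kd] by (metis inf_commute sup.right_idem)
    finally show "?r \<le> sup (?a - of_nat k *\<^sub>R d) 0" .
  qed
  with r0 show ?thesis by simp
qed

end

theorem lemmaS3:
  fixes X B :: "'u::{ordered_real_vector, conditionally_complete_lattice} set"
    and x :: "nat \<Rightarrow> 'u" and u :: 'u and P :: "'u \<Rightarrow> 'u"
  assumes "universal_completion_of X"
    and "dedekind_complete_in X"
    and "\<forall>n. 0 \<le> x n"
    and "band_of X B"
    and "\<forall>b\<in>B. disj u b"
    and "sc_eq X (sc_tail_sum X x 0) (sc_plus (sc_infty B) (sc_emb X u))"
    and "band_projection X B P"
  shows "\<forall>y\<in>X. 0 \<le> y \<longrightarrow>
           (\<exists>z. (\<forall>n. z n \<in> X \<and> sc_eq X {z n} (sc_inf {y} (sc_tail_sum X x n))) \<and> order_conv z (P y))"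
proof (intro ballI impI)
  interpret series_eq_infty_band_plus X B x u
    using assms(1,3,4,6) by unfold_locales (simp_all add: universal_completion_of_def)
  fix y assume y: "y \<in> X" "0 \<le> y"
  define d where "d = y - P y"
  have P: "P y \<in> B" and d: "d \<in> X" "\<forall>b\<in>B. disj d b"
    using assms(7) y(1) by (auto simp: band_projection_def disj_compl_def d_def)
  have yd: "y = P y + d" by (simp add: d_def)
  have "disj d (P y)" using d(2) P by blast
  then have P0: "0 \<le> P y" and d0: "0 \<le> d"
    using nonneg_if_add_disj [of "P y" d] nonneg_if_add_disj [of d "P y"] y(2) yd
    by (simp_all add: disj_sym add.commute)
  show "\<exists>z. (\<forall>n. z n \<in> X \<and> sc_eq X {z n} (sc_inf {y} (sc_tail_sum X x n))) \<and> order_conv z (P y)"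
  proof (intro exI [of _ "\<lambda>n. inf_tail x n y"] conjI allI)
    show "inf_tail x n y \<in> X" "sc_eq X {inf_tail x n y} (sc_inf {y} (sc_tail_sum X x n))" for n
      using inf_tail_sc_eq [OF subspace dense assms(2) _ y(1)] nonneg by blast+
    show "order_conv (\<lambda>n. inf_tail x n y) (P y)"
    proof (rule order_conv_squeeze)
      show "decseq (\<lambda>n. inf_tail x n y)" by (simp add: decseq_Suc_iff inf_tail_Suc_le nonneg)
      show "P y \<le> inf_tail x n y" for n
        using inf_tail_band [OF P P0, of n] inf_tail_mono [of "P y" y x n] d0 by (simp add: d_def)
      show "inf_tail x n y \<le> P y + inf_tail x n d" for n
        using inf_tail_add_le [OF P0, of x n d] by (simp add: d_def)
      show "(INF n. inf_tail x n d) = 0" by (rule Inf_inf_tail_disjoint [OF d(1) d0 d(2)])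
    qed
  qed
qed

end
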